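(* Let $R=(r_{ij})$ be a real symmetric $n\times n$ matrix with zero diagonal and $\rho(|R|)<1$, and let $R'$ be the backtrackless adjacency matrix (defined in the context). Then $\rho(|R'|)\le\rho(|R|)$.
   Context: $|M|$ denotes the entrywise absolute value of a matrix $M$, and $\rho$ the spectral radius. $G$ is the graph on $V=\{1,\dots,n\}$ with undirected edge $\{i,j\}$ whenever $r_{ij}\neq0$; $\partial i$ is the neighbour set of $i$; each undirected edge gives directed edges $(ij)$ and $(ji)$. GaBP messages: for each directed edge $(ij)$, $\alpha_{ij}=\lim_t\alpha^{(t)}_{ij}$ with $\alpha^{(0)}_{ij}=0$, $\alpha^{(t+1)}_{ij}=r_{ij}^2(1-\sum_{k\in\partial i\setminus j}\alpha^{(t)}_{ki})^{-1}$ (convergent when $\rho(|R|)<1$, with $1-\alpha_{i\setminus j}>0$); $\alpha_{i\setminus j}=\sum_{k\in\partial i\setminus j}\alpha_{ki}$; $r'_{ij}=\frac{r_{ij}}{1-\alpha_{i\setminus j}}$. The backtrackless adjacency matrix $R'$ has rows and columns indexed by the directed edges of $G$ (so it is $2|E|\times2|E|$, $|E|$ the number of edges), with $R'_{(ij),(kl)}=r'_{kl}$ if $j=k$ and $i\neq l$, and $R'_{(ij),(kl)}=0$ otherwise. *)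

theory Defs
  imports Complex_Main
begin

definition is_eigenvalue_on :: "'i set \<Rightarrow> ('i \<Rightarrow> 'i \<Rightarrow> real) \<Rightarrow> complex \<Rightarrow> bool" where
  "is_eigenvalue_on I M lam \<longleftrightarrow>
     (\<exists>v :: 'i \<Rightarrow> complex. (\<exists>i\<in>I. v i \<noteq> 0) \<and>
        (\<forall>i\<in>I. (\<Sum>j\<in>I. complex_of_real (M i j) * v j) = lam * v i))"

definition spec_rad :: "'i set \<Rightarrow> ('i \<Rightarrow> 'i \<Rightarrow> real) \<Rightarrow> real" where
  "spec_rad I M = Sup (insert 0 {cmod lam | lam. is_eigenvalue_on I M lam})"

definition nbrs :: "nat \<Rightarrow> (nat \<Rightarrow> nat \<Rightarrow> real) \<Rightarrow> nat \<Rightarrow> nat set" where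
  "nbrs n R i = {k \<in> {1..n}. R i k \<noteq> 0}"

definition dir_edges :: "nat \<Rightarrow> (nat \<Rightarrow> nat \<Rightarrow> real) \<Rightarrow> (nat \<times> nat) set" where
  "dir_edges n R = {(i, j). i \<in> {1..n} \<and> j \<in> {1..n} \<and> R i j \<noteq> 0}"

fun alpha_iter :: "nat \<Rightarrow> (nat \<Rightarrow> nat \<Rightarrow> real) \<Rightarrow> nat \<Rightarrow> nat \<times> nat \<Rightarrow> real" where
  "alpha_iter n R 0 = (\<lambda>e. 0)"
| "alpha_iter n R (Suc t) = (\<lambda>(i, j).
      (R i j)\<^sup>2 * inverse (1 - (\<Sum>k\<in>nbrs n R i - {j}. alpha_iter n R t (k, i))))"

definition alpha :: "nat \<Rightarrow> (nat \<Rightarrow> nat \<Rightarrow> real) \<Rightarrow> nat \<times> nat \<Rightarrow> real" where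
  "alpha n R e = lim (\<lambda>t. alpha_iter n R t e)"

definition alpha_excl :: "nat \<Rightarrow> (nat \<Rightarrow> nat \<Rightarrow> real) \<Rightarrow> nat \<Rightarrow> nat \<Rightarrow> real" where
  "alpha_excl n R i j = (\<Sum>k\<in>nbrs n R i - {j}. alpha n R (k, i))"

definition r_prime :: "nat \<Rightarrow> (nat \<Rightarrow> nat \<Rightarrow> real) \<Rightarrow> nat \<Rightarrow> nat \<Rightarrow> real" where
  "r_prime n R i j = R i j / (1 - alpha_excl n R i j)"

definition backtrackless :: "nat \<Rightarrow> (nat \<Rightarrow> nat \<Rightarrow> real) \<Rightarrow> nat \<times> nat \<Rightarrow> nat \<times> nat \<Rightarrow> real" where
  "backtrackless n R e f =
     (case e of (i, j) \<Rightarrow> case f of (k, l) \<Rightarrow>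
        if j = k \<and> i \<noteq> l then r_prime n R k l else 0)"

end

theory Submission
  imports Defs "Jordan_Normal_Form.Spectral_Radius"
begin

text \<open>
  It suffices to find, for every c with rho(|R|) < c < 1, a positive weighting phi of the
  directed edges that is left subinvariant: phi^T |R'| <= c phi^T. Choose d strictly between
  rho(|R|) and c and a positive vector x with |R| x <= d x (a truncated Neumann series).
  By induction the GaBP iterates increase and stay in [0, d |r_ij| x_i / x_j]; hence they
  converge, the limit satisfies the update equation, and 1 - alpha_(i\j) >= 1 - d^2 > 0.
  The weighting phi(j,l) = |r_jl| x_j - alpha_jl x_l / c then works: the fixed point equation
  reduces both positivity and subinvariance of phi to elementary inequalities per edge.
\<close>

lemma cmod_eigenvalue_le_sum_abs:
  assumes fin: "finite I" and ev: "is_eigenvalue_on I M lam"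
  shows "cmod lam \<le> (\<Sum>i\<in>I. \<Sum>j\<in>I. \<bar>M i j\<bar>)"
proof -
  from ev obtain v where nz: "\<exists>i\<in>I. v i \<noteq> 0"
    and eq: "\<forall>i\<in>I. (\<Sum>j\<in>I. complex_of_real (M i j) * v j) = lam * v i"
    unfolding is_eigenvalue_on_def by blast
  define m where "m = Max ((\<lambda>i. cmod (v i)) ` I)"
  have "m \<in> (\<lambda>i. cmod (v i)) ` I" unfolding m_def using fin nz by (intro Max_in) auto
  then obtain i0 where i0: "i0 \<in> I" "m = cmod (v i0)" by auto
  have m_ge: "cmod (v i) \<le> m" if "i \<in> I" for i unfolding m_def using fin that by auto
  have m_pos: "m > 0" using nz m_ge by (metis order_less_le_trans zero_less_norm_iff)
  have "cmod lam * m = cmod (\<Sum>j\<in>I. complex_of_real (M i0 j) * v j)"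
    using eq i0 by (simp add: norm_mult)
  also have "\<dots> \<le> (\<Sum>j\<in>I. \<bar>M i0 j\<bar> * m)"
    by (rule order_trans[OF norm_sum sum_mono]) (simp add: norm_mult m_ge mult_left_mono)
  also have "\<dots> \<le> (\<Sum>i\<in>I. \<Sum>j\<in>I. \<bar>M i j\<bar>) * m"
    unfolding sum_distrib_right[symmetric] using fin i0(1) m_pos
    by (intro mult_right_mono member_le_sum) (auto intro: sum_nonneg)
  finally show ?thesis using m_pos by simp
qed

lemma bdd_above_eigenvalue_norms:
  "finite I \<Longrightarrow> bdd_above (insert 0 {cmod lam | lam. is_eigenvalue_on I M lam})"
  using cmod_eigenvalue_le_sum_abs unfolding bdd_above_def
  by (intro exI[of _ "max 0 (\<Sum>i\<in>I. \<Sum>j\<in>I. \<bar>M i j\<bar>)"]) fastforce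

lemma spec_rad_nonneg: "finite I \<Longrightarrow> 0 \<le> spec_rad I M"
  unfolding spec_rad_def by (rule cSup_upper[OF _ bdd_above_eigenvalue_norms]) auto

lemma cmod_eigenvalue_le_spec_rad:
  "finite I \<Longrightarrow> is_eigenvalue_on I M lam \<Longrightarrow> cmod lam \<le> spec_rad I M"
  unfolding spec_rad_def by (rule cSup_upper[OF _ bdd_above_eigenvalue_norms]) auto

lemma spec_rad_leI:
  assumes "0 \<le> c" "\<And>lam. is_eigenvalue_on I M lam \<Longrightarrow> cmod lam \<le> c"
  shows "spec_rad I M \<le> c"
  unfolding spec_rad_def using assms by (intro cSup_least) auto

lemma is_eigenvalue_on_divide:
  assumes "c \<noteq> 0" "is_eigenvalue_on I (\<lambda>i j. M i j / c) lam"
  shows "is_eigenvalue_on I M (complex_of_real c * lam)"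
proof -
  from assms(2) obtain v where nz: "\<exists>i\<in>I. v i \<noteq> 0"
    and eq: "\<forall>i\<in>I. (\<Sum>j\<in>I. complex_of_real (M i j / c) * v j) = lam * v i"
    unfolding is_eigenvalue_on_def by blast
  have "(\<Sum>j\<in>I. complex_of_real (M i j) * v j) = complex_of_real c * lam * v i" if "i \<in> I" for i
  proof -
    have "(\<Sum>j\<in>I. complex_of_real (M i j) * v j)
        = complex_of_real c * (\<Sum>j\<in>I. complex_of_real (M i j / c) * v j)"
      using assms(1) by (simp add: sum_distrib_left)
    then show ?thesis using eq that by simp
  qed
  with nz show ?thesis unfolding is_eigenvalue_on_def by blast
qed

lemma spec_rad_divide_le:
  assumes "finite I" "0 < c"
  shows "spec_rad I (\<lambda>i j. M i j / c) \<le> spec_rad I M / c"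
proof (rule spec_rad_leI)
  show "0 \<le> spec_rad I M / c" using assms by (simp add: spec_rad_nonneg)
  fix lam assume "is_eigenvalue_on I (\<lambda>i j. M i j / c) lam"
  from cmod_eigenvalue_le_spec_rad[OF assms(1) is_eigenvalue_on_divide[OF _ this]] assms(2)
  show "cmod lam \<le> spec_rad I M / c" by (simp add: norm_mult le_divide_eq mult.commute)
qed

lemma spec_rad_le_of_pos_left_subinvariant:
  assumes fin: "finite E" and nonneg: "\<forall>e\<in>E. \<forall>f\<in>E. 0 \<le> M e f"
    and pos: "\<forall>e\<in>E. 0 < \<phi> e"
    and sub: "\<forall>f\<in>E. (\<Sum>e\<in>E. \<phi> e * M e f) \<le> c * \<phi> f"
    and "0 \<le> c"
  shows "spec_rad E M \<le> c"
proof (rule spec_rad_leI[OF \<open>0 \<le> c\<close>])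
  fix lam assume "is_eigenvalue_on E M lam"
  then obtain v where nz: "\<exists>e\<in>E. v e \<noteq> 0"
    and eq: "\<forall>e\<in>E. (\<Sum>f\<in>E. complex_of_real (M e f) * v f) = lam * v e"
    unfolding is_eigenvalue_on_def by blast
  define w where "w e = cmod (v e)" for e
  have row: "cmod lam * w e \<le> (\<Sum>f\<in>E. M e f * w f)" if "e \<in> E" for e
  proof -
    have "cmod lam * w e = cmod (\<Sum>f\<in>E. complex_of_real (M e f) * v f)"
      using eq that by (simp add: w_def norm_mult)
    also have "\<dots> \<le> (\<Sum>f\<in>E. M e f * w f)"
      using nonneg that by (intro order_trans[OF norm_sum] sum_mono) (auto simp: norm_mult w_def)
    finally show ?thesis .
  qed
  have "cmod lam * (\<Sum>e\<in>E. \<phi> e * w e) = (\<Sum>e\<in>E. \<phi> e * (cmod lam * w e))"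
    by (simp add: sum_distrib_left algebra_simps)
  also have "\<dots> \<le> (\<Sum>e\<in>E. \<phi> e * (\<Sum>f\<in>E. M e f * w f))"
    using pos row by (intro sum_mono mult_left_mono) auto
  also have "\<dots> = (\<Sum>f\<in>E. \<Sum>e\<in>E. \<phi> e * M e f * w f)"
    by (subst sum.swap) (simp add: sum_distrib_left mult.assoc)
  also have "\<dots> = (\<Sum>f\<in>E. (\<Sum>e\<in>E. \<phi> e * M e f) * w f)"
    by (simp add: sum_distrib_right)
  also have "\<dots> \<le> (\<Sum>f\<in>E. c * \<phi> f * w f)"
    using sub by (intro sum_mono mult_right_mono) (auto simp: w_def)
  also have "\<dots> = c * (\<Sum>e\<in>E. \<phi> e * w e)" by (simp add: sum_distrib_left algebra_simps)
  finally have "cmod lam * (\<Sum>e\<in>E. \<phi> e * w e) \<le> c * (\<Sum>e\<in>E. \<phi> e * w e)" .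
  moreover from nz obtain e0 where "e0 \<in> E" "v e0 \<noteq> 0" by blast
  then have "0 < (\<Sum>e\<in>E. \<phi> e * w e)"
    using pos fin by (intro sum_pos2[of E e0]) (auto simp: w_def)
  ultimately show "cmod lam \<le> c" by simp
qed

fun fun_mat_pow :: "nat \<Rightarrow> (nat \<Rightarrow> nat \<Rightarrow> real) \<Rightarrow> nat \<Rightarrow> nat \<Rightarrow> nat \<Rightarrow> real" where
  "fun_mat_pow n A 0 i j = (if i = j then 1 else 0)"
| "fun_mat_pow n A (Suc k) i j = (\<Sum>l\<in>{1..n}. fun_mat_pow n A k i l * A l j)"

definition cmat_of_fun :: "nat \<Rightarrow> (nat \<Rightarrow> nat \<Rightarrow> real) \<Rightarrow> complex mat" where
  "cmat_of_fun n A = mat n n (\<lambda>(i, j). complex_of_real (A (Suc i) (Suc j)))"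

lemma sum_atLeast1_atMost_eq_lessThan:
  "(\<Sum>j\<in>{1..n}. f j) = (\<Sum>j<n. f (Suc j) :: 'a :: comm_monoid_add)"
  by (induct n) (auto simp: sum.lessThan_Suc)

lemma fun_mat_pow_nonneg:
  "\<forall>i\<in>{1..n}. \<forall>j\<in>{1..n}. 0 \<le> A i j \<Longrightarrow> j \<in> {1..n} \<Longrightarrow> 0 \<le> fun_mat_pow n A k i j"
  by (induct k arbitrary: j) (auto intro!: sum_nonneg)

lemma fun_mat_pow_divide:
  "fun_mat_pow n (\<lambda>i j. A i j / c) k i j = fun_mat_pow n A k i j / c ^ k"
  by (induct k arbitrary: j) (auto simp: sum_divide_distrib intro: sum.cong)

lemma index_pow_cmat_of_fun:
  assumes "i < n" "j < n"
  shows "(cmat_of_fun n A ^\<^sub>m k) $$ (i, j) = complex_of_real (fun_mat_pow n A k (Suc i) (Suc j))"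
  using assms(2)
proof (induct k arbitrary: j)
  case 0
  then show ?case using assms(1) by (simp add: cmat_of_fun_def)
next
  case (Suc k)
  have "(cmat_of_fun n A ^\<^sub>m Suc k) $$ (i, j)
      = (\<Sum>l<n. (cmat_of_fun n A ^\<^sub>m k) $$ (i, l) * cmat_of_fun n A $$ (l, j))"
    using assms(1) Suc.prems by (simp add: cmat_of_fun_def scalar_prod_def lessThan_atLeast0)
  also have "\<dots> = (\<Sum>l<n. complex_of_real (fun_mat_pow n A k (Suc i) (Suc l) * A (Suc l) (Suc j)))"
    using Suc by (intro sum.cong) (auto simp: cmat_of_fun_def)
  finally show ?case by (simp only: of_real_sum fun_mat_pow.simps sum_atLeast1_atMost_eq_lessThan)
qed

lemma is_eigenvalue_on_if_eigenvalue_cmat_of_fun: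
  assumes "eigenvalue (cmat_of_fun n A) lam"
  shows "is_eigenvalue_on {1..n} A lam"
proof -
  from assms obtain v where v: "v \<in> carrier_vec n" "v \<noteq> 0\<^sub>v n"
      "cmat_of_fun n A *\<^sub>v v = lam \<cdot>\<^sub>v v"
    unfolding eigenvalue_def eigenvector_def cmat_of_fun_def by auto
  from v(1,2) obtain i0 where i0: "i0 < n" "v $ i0 \<noteq> 0"
    by (metis carrier_vecD eq_vecI index_zero_vec(1,2))
  show ?thesis unfolding is_eigenvalue_on_def
  proof (intro exI[of _ "\<lambda>i. v $ (i - 1)"] conjI ballI)
    show "\<exists>i\<in>{1..n}. v $ (i - 1) \<noteq> 0" using i0 by (intro bexI[of _ "Suc i0"]) auto
    fix i assume "i \<in> {1..n}"
    then obtain i' where i': "i = Suc i'" "i' < n" by (cases i) auto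
    have "(\<Sum>j\<in>{1..n}. complex_of_real (A i j) * v $ (j - 1)) = (cmat_of_fun n A *\<^sub>v v) $ i'"
      unfolding sum_atLeast1_atMost_eq_lessThan using i' v(1)
      by (simp add: cmat_of_fun_def mult_mat_vec_def scalar_prod_def lessThan_atLeast0)
    also have "\<dots> = lam * v $ (i - 1)" using v(3) v(1) i' by simp
    finally show "(\<Sum>j\<in>{1..n}. complex_of_real (A i j) * v $ (j - 1)) = lam * v $ (i - 1)" .
  qed
qed

lemma fun_mat_pow_bounded:
  assumes "spec_rad {1..n} A < 1"
  shows "\<exists>C. \<forall>k. \<forall>i\<in>{1..n}. \<forall>j\<in>{1..n}. \<bar>fun_mat_pow n A k i j\<bar> \<le> C"
proof (cases "n = 0")
  case False
  have carrier: "cmat_of_fun n A \<in> carrier_mat n n" by (simp add: cmat_of_fun_def)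
  have "cmod lam < 1" if "eigenvalue (cmat_of_fun n A) lam" for lam
    using cmod_eigenvalue_le_spec_rad[OF _ is_eigenvalue_on_if_eigenvalue_cmat_of_fun[OF that]]
      assms by fastforce
  then have "spectral_radius (cmat_of_fun n A) < 1"
    using spectral_radius_mem_max(1)[OF carrier] False unfolding spectrum_def by auto
  from spectral_radius_jnf_norm_bound_less_1_upper_triangular[OF carrier this]
  obtain C where C: "\<And>k. norm_bound (cmat_of_fun n A ^\<^sub>m k) C" by auto
  have "\<bar>fun_mat_pow n A k i j\<bar> \<le> C" if "i \<in> {1..n}" "j \<in> {1..n}" for k i j
  proof -
    have ij: "i = Suc (i - 1)" "j = Suc (j - 1)" "i - 1 < n" "j - 1 < n" using that by auto
    have "norm ((cmat_of_fun n A ^\<^sub>m k) $$ (i - 1, j - 1)) \<le> C"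
      using C[of k] ij carrier unfolding norm_bound_def by auto
    then show ?thesis using index_pow_cmat_of_fun[OF ij(3,4)] ij by simp
  qed
  then show ?thesis by blast
qed simp

lemma fun_mat_pow_le_geometric:
  assumes "spec_rad {1..n} A < d"
  shows "\<exists>C. \<forall>k. \<forall>i\<in>{1..n}. \<forall>j\<in>{1..n}. fun_mat_pow n A k i j \<le> C * d ^ k"
proof -
  have d: "0 < d" using assms spec_rad_nonneg[of "{1..n}" A] by simp
  have "spec_rad {1..n} (\<lambda>i j. A i j / d) \<le> spec_rad {1..n} A / d"
    using d by (intro spec_rad_divide_le) auto
  also have "\<dots> < 1" using assms d by simp
  finally have "spec_rad {1..n} (\<lambda>i j. A i j / d) < 1" .
  from fun_mat_pow_bounded[OF this] obtain C
    where "\<forall>k. \<forall>i\<in>{1..n}. \<forall>j\<in>{1..n}. \<bar>fun_mat_pow n A k i j / d ^ k\<bar> \<le> C"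
    unfolding fun_mat_pow_divide by blast
  then have "fun_mat_pow n A k i j \<le> C * d ^ k" if "i \<in> {1..n}" "j \<in> {1..n}" for k i j
    using that d by (fastforce simp: divide_le_eq dest: abs_le_D1)
  then show ?thesis by blast
qed

lemma pos_left_subinvariant_vector:
  fixes A :: "nat \<Rightarrow> nat \<Rightarrow> real"
  assumes nonneg: "\<forall>i\<in>{1..n}. \<forall>j\<in>{1..n}. 0 \<le> A i j" and lt: "spec_rad {1..n} A < d"
  shows "\<exists>x. (\<forall>i\<in>{1..n}. 0 < x i) \<and> (\<forall>i\<in>{1..n}. (\<Sum>j\<in>{1..n}. x j * A j i) \<le> d * x i)"
proof -
  define d' where "d' = (spec_rad {1..n} A + d) / 2"
  have d': "spec_rad {1..n} A < d'" "0 < d'" "d' < d"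
    using lt spec_rad_nonneg[of "{1..n}" A] unfolding d'_def by auto
  obtain C where C: "\<forall>k. \<forall>i\<in>{1..n}. \<forall>j\<in>{1..n}. fun_mat_pow n A k i j \<le> C * d' ^ k"
    using fun_mat_pow_le_geometric[OF d'(1)] by blast
  have "(\<lambda>k. real n * C * (d' / d) ^ k) \<longlonglongrightarrow> real n * C * 0"
    using d' by (intro tendsto_mult_left LIMSEQ_power_zero) auto
  then have "\<forall>\<^sub>F k in sequentially. real n * C * (d' / d) ^ k < 1"
    by (rule order_tendstoD(2)) simp
  then obtain N where "\<forall>k\<ge>N. real n * C * (d' / d) ^ k < 1"
    unfolding eventually_sequentially by blast
  then have N: "real n * C * (d' / d) ^ Suc N < 1" using le_SucI[OF order_refl, of N] by blast
  define s where "s k j = (\<Sum>i\<in>{1..n}. fun_mat_pow n A k i j)" for k j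
  have s_0: "s 0 j = 1" if "j \<in> {1..n}" for j
    using that unfolding s_def by (simp add: sum.delta)
  have s_Suc: "s (Suc k) j = (\<Sum>l\<in>{1..n}. s k l * A l j)" for k j
    unfolding s_def fun_mat_pow.simps sum_distrib_right by (rule sum.swap)
  have s_nonneg: "0 \<le> s k j" if "j \<in> {1..n}" for k j
    unfolding s_def using fun_mat_pow_nonneg[OF nonneg that] by (intro sum_nonneg) auto
  have s_tail: "s (Suc N) j / d ^ Suc N \<le> 1" if "j \<in> {1..n}" for j
  proof -
    have "s (Suc N) j \<le> of_nat (card {1..n}) * (C * d' ^ Suc N)"
      unfolding s_def using C that by (intro sum_bounded_above) blast
    then have "s (Suc N) j / d ^ Suc N \<le> real n * C * (d' / d) ^ Suc N"
      using d' by (simp add: divide_right_mono power_divide)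
    with N show ?thesis by simp
  qed
  define x where "x j = (\<Sum>k\<le>N. s k j / d ^ k)" for j
  have "0 < x i \<and> (\<Sum>j\<in>{1..n}. x j * A j i) \<le> d * x i" if i: "i \<in> {1..n}" for i
  proof
    have "s 0 i / d ^ 0 \<le> x i"
      unfolding x_def using s_nonneg[OF i] d' by (intro member_le_sum) auto
    then show "0 < x i" using s_0[OF i] by simp
    have "(\<Sum>j\<in>{1..n}. x j * A j i) = (\<Sum>k\<le>N. \<Sum>j\<in>{1..n}. s k j * A j i / d ^ k)"
      unfolding x_def sum_distrib_right by (subst sum.swap) simp
    also have "\<dots> = (\<Sum>k\<le>N. s (Suc k) i / d ^ k)"
      unfolding s_Suc by (simp add: sum_divide_distrib)
    also have "\<dots> = d * (\<Sum>k\<le>N. s (Suc k) i / d ^ Suc k)"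
      using d' by (simp add: sum_distrib_left)
    also have "(\<Sum>k\<le>N. s (Suc k) i / d ^ Suc k) = x i + s (Suc N) i / d ^ Suc N - 1"
      using sum.atMost_Suc_shift[of "\<lambda>k. s k i / d ^ k" N] s_0[OF i] unfolding x_def by simp
    also have "d * \<dots> \<le> d * x i"
      using s_tail[OF i] d' by (intro mult_left_mono) auto
    finally show "(\<Sum>j\<in>{1..n}. x j * A j i) \<le> d * x i" .
  qed
  then show ?thesis by blast
qed

lemma gabp_update_bounds:
  fixes d xi xj S r :: real
  assumes d: "0 < d" "d < 1" and x: "0 < xi" "0 < xj"
    and S: "0 \<le> S" "S \<le> d * d - d * \<bar>r\<bar> * xj / xi" and rb: "\<bar>r\<bar> * xj \<le> d * xi"
  shows "0 < 1 - S" "r\<^sup>2 * inverse (1 - S) \<le> d * \<bar>r\<bar> * xi / xj"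
proof -
  define a where "a = \<bar>r\<bar> * xj / xi"
  have a0: "0 \<le> a" unfolding a_def using x by simp
  have dd: "d * d < 1" using d mult_left_le[of d d] by linarith
  have D: "1 - d * d + d * a \<le> 1 - S" using S unfolding a_def by simp
  have Dp: "0 < 1 - d * d + d * a" using dd a0 d by (smt (verit) mult_nonneg_nonneg)
  show "0 < 1 - S" using D Dp by simp
  have "r\<^sup>2 * inverse (1 - S) = r\<^sup>2 / (1 - S)" by (simp add: divide_inverse)
  also have "\<dots> \<le> r\<^sup>2 / (1 - d * d + d * a)"
    using D Dp by (intro divide_left_mono) auto
  also have "\<dots> \<le> d * \<bar>r\<bar> * xi / xj"
  proof -
    have "\<bar>r\<bar> * xj * (1 - d * d) \<le> d * xi * (1 - d * d)"
      using rb dd by (intro mult_right_mono) auto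
    hence "\<bar>r\<bar> * (\<bar>r\<bar> * xj * (1 - d * d)) \<le> \<bar>r\<bar> * (d * xi * (1 - d * d))"
      by (intro mult_left_mono) auto
    hence "r\<^sup>2 * xj \<le> d * \<bar>r\<bar> * xi * (1 - d * d + d * a)"
      unfolding a_def using x by (simp add: algebra_simps power2_eq_square abs_mult_self_eq)
    thus ?thesis using Dp x by (simp add: divide_le_eq le_divide_eq mult.commute mult.left_commute)
  qed
  finally show "r\<^sup>2 * inverse (1 - S) \<le> d * \<bar>r\<bar> * xi / xj" .
qed

lemma edge_weight_pos_ineq:
  fixes c d xj xl ae r :: real
  assumes cd: "0 < d" "d < c" "c \<le> 1" and x: "0 < xj" "0 < xl" and r: "r \<noteq> 0"
    and ae: "ae \<le> d * d - d * \<bar>r\<bar> * xl / xj"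
    and rb: "\<bar>r\<bar> * xl \<le> d * xj" and D: "0 < 1 - ae"
  shows "0 < \<bar>r\<bar> * xj - r\<^sup>2 * inverse (1 - ae) * xl / c"
proof -
  define y where "y = \<bar>r\<bar> * xl"
  have "ae * xj \<le> (d * d - d * y / xj) * xj"
    using ae x unfolding y_def by (intro mult_right_mono) auto
  also have "(d * d - d * y / xj) * xj = d * d * xj - d * y" using x by (simp add: algebra_simps)
  finally have "(1 - ae) * xj \<ge> (1 - d * d) * xj + d * y" by (simp add: algebra_simps)
  hence "c * ((1 - ae) * xj) \<ge> c * ((1 - d * d) * xj + d * y)"
    using cd by (intro mult_left_mono) auto
  moreover have "(1 - c * d) * y \<le> (1 - c * d) * (d * xj)"
    using rb cd unfolding y_def by (intro mult_left_mono) (auto simp: mult_le_one)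
  moreover have "c * (1 - d * d) * xj - (1 - c * d) * (d * xj) = (c - d) * xj"
    by (simp add: algebra_simps)
  moreover have "0 < (c - d) * xj" using cd x by simp
  ultimately have key: "y < c * (1 - ae) * xj" by (simp add: algebra_simps)
  have "\<bar>r\<bar> * xj - r\<^sup>2 * inverse (1 - ae) * xl / c = \<bar>r\<bar> / (c * (1 - ae)) * (c * (1 - ae) * xj - y)"
    using D cd r unfolding y_def by (simp add: field_simps power2_eq_square abs_mult_self_eq)
  moreover have "0 < \<bar>r\<bar> / (c * (1 - ae))" using r D cd by simp
  moreover have "0 < c * (1 - ae) * xj - y" using key by simp
  ultimately show ?thesis by (metis mult_pos_pos)
qed

lemma edge_weight_subinvariant_ineq:
  fixes c d xj xl ae r P :: real
  assumes cd: "0 < d" "d < c" "c \<le> 1" and x: "0 < xj" and ae0: "0 \<le> ae"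
    and P: "P \<le> d * xj - \<bar>r\<bar> * xl" and D: "0 < 1 - ae"
  shows "\<bar>r / (1 - ae)\<bar> * (P - xj * ae / c)
    \<le> c * (\<bar>r\<bar> * xj - r\<^sup>2 * inverse (1 - ae) * xl / c)"
proof -
  have "d - ae / c \<le> c * (1 - ae)"
  proof -
    have cc: "c * c \<le> 1" using cd by (simp add: mult_le_one)
    have "ae * (c * c) \<le> ae" using cc ae0 by (rule mult_left_le)
    hence "(ae * (c * c)) / c \<le> ae / c" using cd by (intro divide_right_mono) auto
    moreover have "(ae * (c * c)) / c = ae * c" using cd by simp
    ultimately have "ae * c \<le> ae / c" by simp
    thus ?thesis using cd by (simp add: algebra_simps)
  qed
  hence "\<bar>r\<bar> * xj * (d - ae / c) \<le> \<bar>r\<bar> * xj * (c * (1 - ae))"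
    using x by (intro mult_left_mono) auto
  hence *: "\<bar>r\<bar> * (d * xj - \<bar>r\<bar> * xl - xj * ae / c) \<le> c * \<bar>r\<bar> * xj * (1 - ae) - r\<^sup>2 * xl"
    by (simp add: algebra_simps power2_eq_square abs_mult_self_eq)
  have "\<bar>r / (1 - ae)\<bar> * (P - xj * ae / c) \<le> \<bar>r / (1 - ae)\<bar> * (d * xj - \<bar>r\<bar> * xl - xj * ae / c)"
    using P by (intro mult_left_mono) auto
  also have "\<dots> = \<bar>r\<bar> * (d * xj - \<bar>r\<bar> * xl - xj * ae / c) / (1 - ae)"
    using D by simp
  also have "\<dots> \<le> (c * \<bar>r\<bar> * xj * (1 - ae) - r\<^sup>2 * xl) / (1 - ae)"
    using * D by (intro divide_right_mono) auto
  also have "\<dots> = c * (\<bar>r\<bar> * xj - r\<^sup>2 * inverse (1 - ae) * xl / c)"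
    using D cd by (simp add: field_simps)
  finally show ?thesis .
qed

lemma nbrsD: "k \<in> nbrs n R i \<Longrightarrow> k \<in> {1..n}"
  unfolding nbrs_def by auto

lemma finite_dir_edges: "finite (dir_edges n R)"
  by (rule finite_subset[of _ "{1..n} \<times> {1..n}"]) (auto simp: dir_edges_def)

lemma backtrackless_column_sum:
  assumes sym: "\<forall>i\<in>{1..n}. \<forall>j\<in>{1..n}. R i j = R j i" and jl: "(j, l) \<in> dir_edges n R"
  shows "(\<Sum>e\<in>dir_edges n R. \<phi> e * \<bar>backtrackless n R e (j, l)\<bar>)
       = \<bar>r_prime n R j l\<bar> * (\<Sum>i\<in>nbrs n R j - {l}. \<phi> (i, j))"
proof -
  define E where "E = dir_edges n R"
  define T where "T = {e. snd e = j \<and> fst e \<noteq> l}"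
  have j: "j \<in> {1..n}" using jl by (simp add: dir_edges_def)
  have edges_into_j: "E \<inter> T = (\<lambda>i. (i, j)) ` (nbrs n R j - {l})"
    using sym j by (auto simp: E_def T_def dir_edges_def nbrs_def)
  have "(\<Sum>e\<in>E. \<phi> e * \<bar>backtrackless n R e (j, l)\<bar>)
      = (\<Sum>e\<in>E. if e \<in> T then \<bar>r_prime n R j l\<bar> * \<phi> e else 0)"
    unfolding T_def backtrackless_def by (intro sum.cong) (auto split: prod.splits)
  also have "\<dots> = (\<Sum>e\<in>E \<inter> T. \<bar>r_prime n R j l\<bar> * \<phi> e)"
    using finite_dir_edges by (simp add: E_def sum.inter_restrict)
  also have "\<dots> = (\<Sum>e\<in>(\<lambda>i. (i, j)) ` (nbrs n R j - {l}). \<bar>r_prime n R j l\<bar> * \<phi> e)"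
    using edges_into_j by simp
  also have "\<dots> = \<bar>r_prime n R j l\<bar> * (\<Sum>i\<in>nbrs n R j - {l}. \<phi> (i, j))"
    by (simp add: sum.reindex inj_on_def sum_distrib_left)
  finally show ?thesis unfolding E_def .
qed

definition edge_weight :: "nat \<Rightarrow> (nat \<Rightarrow> nat \<Rightarrow> real) \<Rightarrow> (nat \<Rightarrow> real) \<Rightarrow> real \<Rightarrow> nat \<times> nat \<Rightarrow> real"
  where "edge_weight n R x c = (\<lambda>(j, l). \<bar>R j l\<bar> * x j - alpha n R (j, l) * x l / c)"

context
  fixes n :: nat and R :: "nat \<Rightarrow> nat \<Rightarrow> real" and x :: "nat \<Rightarrow> real" and d :: real
  assumes sym: "\<forall>i\<in>{1..n}. \<forall>j\<in>{1..n}. R i j = R j i"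
    and x_pos: "\<forall>i\<in>{1..n}. 0 < x i"
    and x_subinvariant: "\<forall>i\<in>{1..n}. (\<Sum>j\<in>{1..n}. \<bar>R i j\<bar> * x j) \<le> d * x i"
    and d_pos: "0 < d" and d_less_1: "d < 1"
begin

lemma x_nonneg: "\<forall>i\<in>{1..n}. 0 \<le> x i"
  using x_pos by (auto intro: less_imp_le)

lemma sum_nbrs_excl_le:
  assumes i: "i \<in> {1..n}" and j: "j \<in> {1..n}"
  shows "(\<Sum>k\<in>nbrs n R i - {j}. \<bar>R i k\<bar> * x k) \<le> d * x i - \<bar>R i j\<bar> * x j"
proof -
  have "(\<Sum>k\<in>nbrs n R i - {j}. \<bar>R i k\<bar> * x k) \<le> (\<Sum>k\<in>{1..n} - {j}. \<bar>R i k\<bar> * x k)"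
    using x_nonneg by (intro sum_mono2) (auto dest: nbrsD)
  also have "\<dots> = (\<Sum>k\<in>{1..n}. \<bar>R i k\<bar> * x k) - \<bar>R i j\<bar> * x j"
    using j by (simp add: sum_diff1)
  finally show ?thesis using x_subinvariant i by fastforce
qed

lemma abs_mult_le_scaled:
  assumes i: "i \<in> {1..n}" and j: "j \<in> {1..n}"
  shows "\<bar>R i j\<bar> * x j \<le> d * x i"
proof -
  have "0 \<le> (\<Sum>k\<in>nbrs n R i - {j}. \<bar>R i k\<bar> * x k)"
    using x_nonneg by (intro sum_nonneg) (auto dest: nbrsD)
  then show ?thesis using sum_nbrs_excl_le[OF i j] by simp
qed

lemma sum_messages_excl_bounds:
  assumes \<beta>: "\<forall>k\<in>{1..n}. \<forall>i\<in>{1..n}. 0 \<le> \<beta> (k, i) \<and> \<beta> (k, i) \<le> d * \<bar>R k i\<bar> * x k / x i"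
    and i: "i \<in> {1..n}" and j: "j \<in> {1..n}"
  shows "0 \<le> (\<Sum>k\<in>nbrs n R i - {j}. \<beta> (k, i))"
    "(\<Sum>k\<in>nbrs n R i - {j}. \<beta> (k, i)) \<le> d * d - d * \<bar>R i j\<bar> * x j / x i"
proof -
  show "0 \<le> (\<Sum>k\<in>nbrs n R i - {j}. \<beta> (k, i))"
    using \<beta> i by (intro sum_nonneg) (auto dest: nbrsD)
  have xi: "0 < x i" using x_pos i by auto
  have "(\<Sum>k\<in>nbrs n R i - {j}. \<beta> (k, i)) \<le> (\<Sum>k\<in>nbrs n R i - {j}. d / x i * (\<bar>R i k\<bar> * x k))"
  proof (rule sum_mono)
    fix k assume "k \<in> nbrs n R i - {j}"
    then have k: "k \<in> {1..n}" by (auto dest: nbrsD)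
    have "\<beta> (k, i) \<le> d * \<bar>R k i\<bar> * x k / x i" using \<beta> k i by auto
    also have "\<dots> = d / x i * (\<bar>R i k\<bar> * x k)" using sym k i by auto
    finally show "\<beta> (k, i) \<le> d / x i * (\<bar>R i k\<bar> * x k)" .
  qed
  also have "\<dots> = d / x i * (\<Sum>k\<in>nbrs n R i - {j}. \<bar>R i k\<bar> * x k)"
    by (simp add: sum_distrib_left)
  also have "\<dots> \<le> d / x i * (d * x i - \<bar>R i j\<bar> * x j)"
    using sum_nbrs_excl_le[OF i j] xi d_pos by (intro mult_left_mono) auto
  also have "\<dots> = d * d - d * \<bar>R i j\<bar> * x j / x i" using xi by (simp add: field_simps)
  finally show "(\<Sum>k\<in>nbrs n R i - {j}. \<beta> (k, i)) \<le> d * d - d * \<bar>R i j\<bar> * x j / x i" .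
qed

lemma alpha_iter_bounds:
  "\<forall>i\<in>{1..n}. \<forall>j\<in>{1..n}.
     0 \<le> alpha_iter n R t (i, j) \<and> alpha_iter n R t (i, j) \<le> d * \<bar>R i j\<bar> * x i / x j"
proof (induct t)
  case 0
  then show ?case using x_nonneg d_pos by auto
next
  case (Suc t)
  show ?case
  proof (intro ballI)
    fix i j assume i: "i \<in> {1..n}" and j: "j \<in> {1..n}"
    define S where "S = (\<Sum>k\<in>nbrs n R i - {j}. alpha_iter n R t (k, i))"
    have "0 \<le> S" "S \<le> d * d - d * \<bar>R i j\<bar> * x j / x i"
      using sum_messages_excl_bounds[OF Suc i j] unfolding S_def by auto
    note update = gabp_update_bounds[OF d_pos d_less_1 _ _ this abs_mult_le_scaled[OF i j]]
    have "alpha_iter n R (Suc t) (i, j) = (R i j)\<^sup>2 * inverse (1 - S)" unfolding S_def by simp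
    then show "0 \<le> alpha_iter n R (Suc t) (i, j)
        \<and> alpha_iter n R (Suc t) (i, j) \<le> d * \<bar>R i j\<bar> * x i / x j"
      using update x_pos i j by auto
  qed
qed

lemma alpha_iter_mono:
  "\<forall>i\<in>{1..n}. \<forall>j\<in>{1..n}. alpha_iter n R t (i, j) \<le> alpha_iter n R (Suc t) (i, j)"
proof (induct t)
  case 0
  then show ?case using alpha_iter_bounds[of 1] by simp
next
  case (Suc t)
  show ?case
  proof (intro ballI)
    fix i j assume i: "i \<in> {1..n}" and j: "j \<in> {1..n}"
    define S where "S = (\<Sum>k\<in>nbrs n R i - {j}. alpha_iter n R t (k, i))"
    define S' where "S' = (\<Sum>k\<in>nbrs n R i - {j}. alpha_iter n R (Suc t) (k, i))"
    have "S \<le> S'" unfolding S_def S'_def using Suc i by (intro sum_mono) (auto dest: nbrsD)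
    moreover have "0 \<le> S'" "S' \<le> d * d - d * \<bar>R i j\<bar> * x j / x i"
      using sum_messages_excl_bounds[OF alpha_iter_bounds[of "Suc t"] i j] unfolding S'_def by auto
    then have "0 < 1 - S'"
      using gabp_update_bounds(1)[OF d_pos d_less_1 _ _ _ _ abs_mult_le_scaled[OF i j]] x_pos i j
      by auto
    ultimately have "(R i j)\<^sup>2 * inverse (1 - S) \<le> (R i j)\<^sup>2 * inverse (1 - S')"
      by (intro mult_left_mono le_imp_inverse_le) auto
    then show "alpha_iter n R (Suc t) (i, j) \<le> alpha_iter n R (Suc (Suc t)) (i, j)"
      unfolding S_def S'_def by simp
  qed
qed

lemma alpha_iter_tendsto:
  assumes i: "i \<in> {1..n}" and j: "j \<in> {1..n}"
  shows "(\<lambda>t. alpha_iter n R t (i, j)) \<longlonglongrightarrow> alpha n R (i, j)"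
proof -
  have "incseq (\<lambda>t. alpha_iter n R t (i, j))"
    using alpha_iter_mono i j by (intro incseq_SucI) auto
  moreover have "\<forall>t. alpha_iter n R t (i, j) \<le> d * \<bar>R i j\<bar> * x i / x j"
    using alpha_iter_bounds i j by auto
  ultimately obtain L where "(\<lambda>t. alpha_iter n R t (i, j)) \<longlonglongrightarrow> L"
    using incseq_convergent by blast
  then show ?thesis unfolding alpha_def by (simp add: limI)
qed

lemma alpha_bounds:
  "\<forall>i\<in>{1..n}. \<forall>j\<in>{1..n}. 0 \<le> alpha n R (i, j) \<and> alpha n R (i, j) \<le> d * \<bar>R i j\<bar> * x i / x j"
proof (intro ballI conjI)
  fix i j assume i: "i \<in> {1..n}" and j: "j \<in> {1..n}"
  show "0 \<le> alpha n R (i, j)"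
    using alpha_iter_tendsto[OF i j] alpha_iter_bounds i j by (intro LIMSEQ_le_const) auto
  show "alpha n R (i, j) \<le> d * \<bar>R i j\<bar> * x i / x j"
    using alpha_iter_tendsto[OF i j] alpha_iter_bounds i j by (intro LIMSEQ_le_const2) auto
qed

lemma alpha_excl_bounds:
  assumes i: "i \<in> {1..n}" and j: "j \<in> {1..n}"
  shows "0 \<le> alpha_excl n R i j" "alpha_excl n R i j \<le> d * d - d * \<bar>R i j\<bar> * x j / x i"
    "0 < 1 - alpha_excl n R i j"
proof -
  show bounds: "0 \<le> alpha_excl n R i j" "alpha_excl n R i j \<le> d * d - d * \<bar>R i j\<bar> * x j / x i"
    using sum_messages_excl_bounds[OF alpha_bounds i j] unfolding alpha_excl_def by auto
  show "0 < 1 - alpha_excl n R i j"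
    using gabp_update_bounds(1)[OF d_pos d_less_1 _ _ bounds abs_mult_le_scaled[OF i j]] x_pos i j
    by auto
qed

lemma alpha_eq_update:
  assumes i: "i \<in> {1..n}" and j: "j \<in> {1..n}"
  shows "alpha n R (i, j) = (R i j)\<^sup>2 * inverse (1 - alpha_excl n R i j)"
proof -
  have "(\<lambda>t. alpha_iter n R (Suc t) (i, j)) \<longlonglongrightarrow> alpha n R (i, j)"
    using alpha_iter_tendsto[OF i j] by (rule LIMSEQ_Suc)
  moreover have "(\<lambda>t. alpha_iter n R (Suc t) (i, j))
      \<longlonglongrightarrow> (R i j)\<^sup>2 * inverse (1 - alpha_excl n R i j)"
    unfolding alpha_iter.simps alpha_excl_def split
  proof (intro tendsto_intros)
    show "1 - (\<Sum>k\<in>nbrs n R i - {j}. alpha n R (k, i)) \<noteq> 0"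
      using alpha_excl_bounds(3)[OF i j] unfolding alpha_excl_def by simp
    fix k assume "k \<in> nbrs n R i - {j}"
    then show "(\<lambda>t. alpha_iter n R t (k, i)) \<longlonglongrightarrow> alpha n R (k, i)"
      using alpha_iter_tendsto i by (auto dest: nbrsD)
  qed
  ultimately show ?thesis using LIMSEQ_unique by blast
qed

lemma edge_weight_pos:
  assumes c: "d < c" "c \<le> 1" and jl: "(j, l) \<in> dir_edges n R"
  shows "0 < edge_weight n R x c (j, l)"
proof -
  have j: "j \<in> {1..n}" and l: "l \<in> {1..n}" and r: "R j l \<noteq> 0"
    using jl by (auto simp: dir_edges_def)
  have "0 < \<bar>R j l\<bar> * x j - (R j l)\<^sup>2 * inverse (1 - alpha_excl n R j l) * x l / c"
    using edge_weight_pos_ineq[OF d_pos c _ _ r alpha_excl_bounds(2)[OF j l]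
        abs_mult_le_scaled[OF j l] alpha_excl_bounds(3)[OF j l]] x_pos j l
    by auto
  then show ?thesis unfolding edge_weight_def using alpha_eq_update[OF j l] by simp
qed

lemma edge_weight_left_subinvariant:
  assumes c: "d < c" "c \<le> 1" and jl: "(j, l) \<in> dir_edges n R"
  shows "(\<Sum>e\<in>dir_edges n R. edge_weight n R x c e * \<bar>backtrackless n R e (j, l)\<bar>)
      \<le> c * edge_weight n R x c (j, l)"
proof -
  have j: "j \<in> {1..n}" and l: "l \<in> {1..n}" using jl by (auto simp: dir_edges_def)
  have "(\<Sum>i\<in>nbrs n R j - {l}. edge_weight n R x c (i, j))
      = (\<Sum>i\<in>nbrs n R j - {l}. \<bar>R j i\<bar> * x i - alpha n R (i, j) * x j / c)"
    unfolding edge_weight_def using sym j by (intro sum.cong) (auto dest: nbrsD)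
  also have "\<dots> = (\<Sum>i\<in>nbrs n R j - {l}. \<bar>R j i\<bar> * x i) - x j * alpha_excl n R j l / c"
    unfolding alpha_excl_def
    by (simp add: sum_subtractf sum_divide_distrib sum_distrib_left mult.commute)
  finally have "(\<Sum>e\<in>dir_edges n R. edge_weight n R x c e * \<bar>backtrackless n R e (j, l)\<bar>)
      = \<bar>R j l / (1 - alpha_excl n R j l)\<bar>
        * ((\<Sum>i\<in>nbrs n R j - {l}. \<bar>R j i\<bar> * x i) - x j * alpha_excl n R j l / c)"
    using backtrackless_column_sum[OF sym jl] unfolding r_prime_def by simp
  also have "\<dots> \<le> c * (\<bar>R j l\<bar> * x j - (R j l)\<^sup>2 * inverse (1 - alpha_excl n R j l) * x l / c)"
    using edge_weight_subinvariant_ineq[OF d_pos c _ alpha_excl_bounds(1)[OF j l]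
        sum_nbrs_excl_le[OF j l] alpha_excl_bounds(3)[OF j l]] x_pos j
    by auto
  also have "\<dots> = c * edge_weight n R x c (j, l)"
    unfolding edge_weight_def using alpha_eq_update[OF j l] by simp
  finally show ?thesis .
qed

lemma spec_rad_backtrackless_le:
  assumes "d < c" "c \<le> 1"
  shows "spec_rad (dir_edges n R) (\<lambda>e f. \<bar>backtrackless n R e f\<bar>) \<le> c"
proof (rule spec_rad_le_of_pos_left_subinvariant[OF finite_dir_edges])
  show "\<forall>e\<in>dir_edges n R. 0 < edge_weight n R x c e"
    using edge_weight_pos[OF assms] by auto
  show "\<forall>f\<in>dir_edges n R. (\<Sum>e\<in>dir_edges n R. edge_weight n R x c e * \<bar>backtrackless n R e f\<bar>)
      \<le> c * edge_weight n R x c f"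
    using edge_weight_left_subinvariant[OF assms] by auto
  show "0 \<le> c" using assms d_pos by simp
qed simp

end

theorem lemma5:
  fixes n :: nat and R :: "nat \<Rightarrow> nat \<Rightarrow> real"
  assumes sym: "\<forall>i\<in>{1..n}. \<forall>j\<in>{1..n}. R i j = R j i"
    and diag: "\<forall>i\<in>{1..n}. R i i = 0"
    and rho: "spec_rad {1..n} (\<lambda>i j. \<bar>R i j\<bar>) < 1"
  shows "spec_rad (dir_edges n R) (\<lambda>e f. \<bar>backtrackless n R e f\<bar>)
           \<le> spec_rad {1..n} (\<lambda>i j. \<bar>R i j\<bar>)"
proof (rule dense_ge_bounded[OF rho])
  fix c assume c: "spec_rad {1..n} (\<lambda>i j. \<bar>R i j\<bar>) < c" "c < 1"
  define d where "d = (spec_rad {1..n} (\<lambda>i j. \<bar>R i j\<bar>) + c) / 2"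
  have d: "spec_rad {1..n} (\<lambda>i j. \<bar>R i j\<bar>) < d" "d < c" "0 < d" "d < 1"
    using c spec_rad_nonneg[of "{1..n}" "\<lambda>i j. \<bar>R i j\<bar>"] unfolding d_def by auto
  obtain x where x_pos: "\<forall>i\<in>{1..n}. 0 < x i"
    and x_sub: "\<forall>i\<in>{1..n}. (\<Sum>j\<in>{1..n}. x j * \<bar>R j i\<bar>) \<le> d * x i"
    using pos_left_subinvariant_vector[OF _ d(1)] by auto
  have "(\<Sum>j\<in>{1..n}. \<bar>R i j\<bar> * x j) = (\<Sum>j\<in>{1..n}. x j * \<bar>R j i\<bar>)" if "i \<in> {1..n}" for i
    using sym that by (intro sum.cong) auto
  with x_sub have "\<forall>i\<in>{1..n}. (\<Sum>j\<in>{1..n}. \<bar>R i j\<bar> * x j) \<le> d * x i" by simp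
  from spec_rad_backtrackless_le[OF sym x_pos this d(3,4,2)] c(2)
  show "spec_rad (dir_edges n R) (\<lambda>e f. \<bar>backtrackless n R e f\<bar>) \<le> c" by simp
qed

end
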